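(* Let $\mathcal{G}$ be a finite-dimensional nilpotent Lie algebra and $S$ a finite abelian semigroup. Then the $S$-expanded algebra $\mathcal{G}_S=S\otimes\mathcal{G}$ is nilpotent; any resonant subalgebra $\mathcal{G}_{S,R}$ is nilpotent; and, if $S$ has a zero element $0_S$, the $0_S$-reduced algebra $\mathcal{G}_S^{\mathrm{red}}$ is nilpotent.
   Context: For a Lie algebra $\mathcal{G}$ with basis $\{X_i\}$, $[X_i,X_j]=C_{ij}^kX_k$, and a finite abelian semigroup $S=\{\lambda_\alpha\}$ with 2-selector $K_{\alpha\beta}^\gamma$ ($=1$ if $\lambda_\alpha\lambda_\beta=\lambda_\gamma$, else $0$), $\mathcal{G}_S$ has basis $X_{(i,\alpha)}=\lambda_\alpha\otimes X_i$ and bracket $[X_{(i,\alpha)},X_{(j,\beta)}]=K_{\alpha\beta}^\gamma C_{ij}^kX_{(k,\gamma)}$. A resonant subalgebra: given $\mathcal{G}=\bigoplus_{p\in I}V_p$ with $[V_p,V_q]\subset\bigoplus_{r\in i(p,q)}V_r$ and $S=\bigcup_{p\in I}S_p$ with $S_p\cdot S_q\subset\bigcap_{r\in i(p,q)}S_r$, $\mathcal{G}_{S,R}=\bigoplus_p S_p\otimes V_p$. For a zero element $0_S$ ($0_S\lambda=0_S$ for all $\lambda$), $\mathcal{G}_S^{\mathrm{red}}$ is spanned by $X_{(i,\alpha)}$ with $\lambda_\alpha\ne0_S$ with the same structure constants restricted to $\lambda_\gamma\neq 0_S$. A Lie algebra $\mathcal{L}$ is nilpotent if the lower central series $\mathcal{L}_{(0)}=\mathcal{L}$,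 $\mathcal{L}_{(n)}=[\mathcal{L}_{(n-1)},\mathcal{L}]$ reaches $0$. *)

theory Defs
  imports Main
begin

text \<open>A Lie algebra over a field 'k is presented, as in the paper, by a finite
basis indexed by a set I and structure constants C i j k, with
[X_i, X_j] = sum_k C i j k X_k.\<close>

definition vecs :: "'b set \<Rightarrow> ('b \<Rightarrow> 'k::field) set" where
  "vecs I = {x. \<forall>b. b \<notin> I \<longrightarrow> x b = 0}"

definition lin_span :: "('b \<Rightarrow> 'k::field) set \<Rightarrow> ('b \<Rightarrow> 'k) set" where
  "lin_span A = {x. \<exists>F c. finite F \<and> F \<subseteq> A \<and> x = (\<lambda>b. \<Sum>v\<in>F. c v * v b)}"

definition br :: "'b set \<Rightarrow> ('b \<Rightarrow> 'b \<Rightarrow> 'b \<Rightarrow> 'k::field) \<Rightarrow> ('b \<Rightarrow> 'k) \<Rightarrow> ('b \<Rightarrow> 'k) \<Rightarrow> ('b \<Rightarrow> 'k)" where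
  "br I C x y = (\<lambda>k. if k \<in> I then (\<Sum>i\<in>I. \<Sum>j\<in>I. x i * y j * C i j k) else 0)"

definition is_lie_sc :: "'b set \<Rightarrow> ('b \<Rightarrow> 'b \<Rightarrow> 'b \<Rightarrow> 'k::field) \<Rightarrow> bool" where
  "is_lie_sc I C \<longleftrightarrow> finite I \<and>
     (\<forall>i\<in>I. \<forall>k\<in>I. C i i k = 0) \<and>
     (\<forall>i\<in>I. \<forall>j\<in>I. \<forall>k\<in>I. C i j k = - C j i k) \<and>
     (\<forall>i\<in>I. \<forall>j\<in>I. \<forall>m\<in>I. \<forall>l\<in>I.
        (\<Sum>k\<in>I. C i j k * C k m l + C j m k * C k i l + C m i k * C k j l) = 0)"

fun lcs :: "'b set \<Rightarrow> ('b \<Rightarrow> 'b \<Rightarrow> 'b \<Rightarrow> 'k::field) \<Rightarrow> ('b \<Rightarrow> 'k) set \<Rightarrow> nat \<Rightarrow> ('b \<Rightarrow> 'k) set" where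
  "lcs I C W 0 = W"
| "lcs I C W (Suc n) = lin_span {br I C x y | x y. x \<in> lcs I C W n \<and> y \<in> W}"

definition nilpotent_sub :: "'b set \<Rightarrow> ('b \<Rightarrow> 'b \<Rightarrow> 'b \<Rightarrow> 'k::field) \<Rightarrow> ('b \<Rightarrow> 'k) set \<Rightarrow> bool" where
  "nilpotent_sub I C W \<longleftrightarrow> (\<exists>n. lcs I C W n = {\<lambda>_. 0})"

definition nilpotent_LA :: "'b set \<Rightarrow> ('b \<Rightarrow> 'b \<Rightarrow> 'b \<Rightarrow> 'k::field) \<Rightarrow> bool" where
  "nilpotent_LA I C \<longleftrightarrow> nilpotent_sub I C (vecs I)"

definition fin_ab_semigroup :: "'s set \<Rightarrow> ('s \<Rightarrow> 's \<Rightarrow> 's) \<Rightarrow> bool" where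
  "fin_ab_semigroup S mult \<longleftrightarrow> finite S \<and> S \<noteq> {} \<and>
     (\<forall>a\<in>S. \<forall>b\<in>S. mult a b \<in> S) \<and>
     (\<forall>a\<in>S. \<forall>b\<in>S. \<forall>c\<in>S. mult (mult a b) c = mult a (mult b c)) \<and>
     (\<forall>a\<in>S. \<forall>b\<in>S. mult a b = mult b a)"

definition exp_sc :: "('s \<Rightarrow> 's \<Rightarrow> 's) \<Rightarrow> ('b \<Rightarrow> 'b \<Rightarrow> 'b \<Rightarrow> 'k::field)
     \<Rightarrow> ('b \<times> 's) \<Rightarrow> ('b \<times> 's) \<Rightarrow> ('b \<times> 's) \<Rightarrow> 'k" where
  "exp_sc mult C = (\<lambda>(i,a) (j,b) (k,c). if mult a b = c then C i j k else 0)"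

definition tens :: "'s \<Rightarrow> ('b \<Rightarrow> 'k::field) \<Rightarrow> ('b \<times> 's \<Rightarrow> 'k)" where
  "tens a v = (\<lambda>(i,b). if b = a then v i else 0)"

definition subspace_decomp :: "'b set \<Rightarrow> ('b \<Rightarrow> 'b \<Rightarrow> 'b \<Rightarrow> 'k::field) \<Rightarrow> 'p set
     \<Rightarrow> ('p \<Rightarrow> ('b \<Rightarrow> 'k) set) \<Rightarrow> ('p \<Rightarrow> 'p \<Rightarrow> 'p set) \<Rightarrow> bool" where
  "subspace_decomp I C P V ip \<longleftrightarrow> finite P \<and>
     (\<forall>p\<in>P. V p \<subseteq> vecs I \<and> lin_span (V p) = V p) \<and>
     (\<forall>x\<in>vecs I. \<exists>!v. (\<forall>p. p \<notin> P \<longrightarrow> v p = (\<lambda>_. 0)) \<and> (\<forall>p\<in>P. v p \<in> V p)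
                    \<and> x = (\<lambda>b. \<Sum>p\<in>P. v p b)) \<and>
     (\<forall>p\<in>P. \<forall>q\<in>P. ip p q \<subseteq> P \<and>
        (\<forall>x\<in>V p. \<forall>y\<in>V q. br I C x y \<in> lin_span (\<Union>r\<in>ip p q. V r)))"

definition resonant_decomp :: "'s set \<Rightarrow> ('s \<Rightarrow> 's \<Rightarrow> 's) \<Rightarrow> 'p set
     \<Rightarrow> ('p \<Rightarrow> 'p \<Rightarrow> 'p set) \<Rightarrow> ('p \<Rightarrow> 's set) \<Rightarrow> bool" where
  "resonant_decomp S mult P ip Sp \<longleftrightarrow>
     (\<forall>p\<in>P. Sp p \<subseteq> S) \<and> S = (\<Union>p\<in>P. Sp p) \<and>
     (\<forall>p\<in>P. \<forall>q\<in>P. \<forall>a\<in>Sp p. \<forall>b\<in>Sp q. \<forall>r\<in>ip p q. mult a b \<in> Sp r)"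

definition resonant_sub :: "'p set \<Rightarrow> ('p \<Rightarrow> ('b \<Rightarrow> 'k::field) set) \<Rightarrow> ('p \<Rightarrow> 's set)
     \<Rightarrow> ('b \<times> 's \<Rightarrow> 'k) set" where
  "resonant_sub P V Sp = lin_span (\<Union>p\<in>P. {tens a v | a v. a \<in> Sp p \<and> v \<in> V p})"

end

theory Submission imports Defs begin

text \<open>The bracket of the expanded algebra acts on the \<open>S\<close>-components of vectors by
\<open>[x, y]_c = \<Sum>\<^bsub>ab = c\<^esub> [x_a, y_b]\<close>. By induction, every \<open>S\<close>-component of an element of the
\<open>n\<close>-th term of the lower central series of an arbitrary subspace of \<open>S \<otimes> G\<close> lies in the
\<open>n\<close>-th term \<open>G\<^sub>(\<^sub>n\<^sub>)\<close> of the lower central series of \<open>G\<close>. Once \<open>G\<^sub>(\<^sub>n\<^sub>)\<close> vanishes, so does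
that term. Expanded, resonant and reduced algebras are all subspaces of expanded
algebras over a finite semigroup carrier, so all three are nilpotent.\<close>

lemma zero_in_lin_span: "(\<lambda>_. 0) \<in> lin_span A"
  unfolding lin_span_def by (rule CollectI, rule exI[of _ "{}"]) auto

lemma lin_span_superset: "a \<in> A \<Longrightarrow> a \<in> lin_span A"
  unfolding lin_span_def by (rule CollectI, rule exI[of _ "{a}"], rule exI[of _ "\<lambda>_. 1"]) auto

lemma lin_span_scale_add:
  assumes "u \<in> lin_span A" "v \<in> lin_span A"
  shows "(\<lambda>b. k * u b + v b) \<in> lin_span A"
proof -
  from assms obtain F1 c1 F2 c2 where
    F1: "finite F1" "F1 \<subseteq> A" "u = (\<lambda>b. \<Sum>w\<in>F1. c1 w * w b)" and
    F2: "finite F2" "F2 \<subseteq> A" "v = (\<lambda>b. \<Sum>w\<in>F2. c2 w * w b)"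
    unfolding lin_span_def by blast
  define c where "c w = (if w \<in> F1 then k * c1 w else 0) + (if w \<in> F2 then c2 w else 0)" for w
  have "k * u b + v b = (\<Sum>w\<in>F1 \<union> F2. c w * w b)" for b
  proof -
    have "(\<Sum>w\<in>F1 \<union> F2. c w * w b) =
        (\<Sum>w\<in>F1 \<union> F2. if w \<in> F1 then k * c1 w * w b else 0)
      + (\<Sum>w\<in>F1 \<union> F2. if w \<in> F2 then c2 w * w b else 0)"
      unfolding sum.distrib[symmetric] by (rule sum.cong) (auto simp: c_def algebra_simps)
    also have "\<dots> = (\<Sum>w\<in>F1. k * c1 w * w b) + (\<Sum>w\<in>F2. c2 w * w b)"
      using F1(1) F2(1) by (simp add: sum.inter_restrict[symmetric] Int_absorb1)
    finally show ?thesis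
      using F1(3) F2(3) by (simp add: sum_distrib_left mult.assoc)
  qed
  moreover have "finite (F1 \<union> F2)" "F1 \<union> F2 \<subseteq> A" using F1 F2 by auto
  ultimately show ?thesis unfolding lin_span_def by blast
qed

lemma lin_span_sum:
  assumes "finite A" "\<And>a. a \<in> A \<Longrightarrow> f a \<in> lin_span X"
  shows "(\<lambda>b. \<Sum>a\<in>A. f a b) \<in> lin_span X"
  using assms
proof (induction A rule: finite_induct)
  case empty then show ?case by (simp add: zero_in_lin_span)
next
  case (insert a A)
  have "(\<lambda>b. 1 * f a b + (\<Sum>a\<in>A. f a b)) \<in> lin_span X"
    using insert.IH insert.prems by (intro lin_span_scale_add) auto
  then show ?case using insert.hyps by simp
qed

lemma lin_span_induct [consumes 1, case_names base zero scale_add]: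
  assumes "x \<in> lin_span A"
    and "\<And>a. a \<in> A \<Longrightarrow> P a" and "P (\<lambda>_. 0)"
    and "\<And>k u v. P u \<Longrightarrow> P v \<Longrightarrow> P (\<lambda>b. k * u b + v b)"
  shows "P x"
proof -
  from assms(1) obtain F c where F: "finite F" "F \<subseteq> A" "x = (\<lambda>b. \<Sum>w\<in>F. c w * w b)"
    unfolding lin_span_def by blast
  have "P (\<lambda>b. \<Sum>w\<in>F. c w * w b)" using F(1,2)
  proof (induction F rule: finite_induct)
    case empty then show ?case using assms(3) by simp
  next
    case (insert a F)
    then show ?case using assms(2)[of a] assms(4)[of a "\<lambda>b. \<Sum>w\<in>F. c w * w b" "c a"] by simp
  qed
  then show ?thesis using F(3) by simp
qed

lemma lin_span_subset_vecs:
  assumes "A \<subseteq> vecs I"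
  shows "lin_span A \<subseteq> vecs I"
proof
  fix x assume "x \<in> lin_span A"
  then show "x \<in> vecs I" using assms by (induction rule: lin_span_induct) (auto simp: vecs_def)
qed

lemma lin_span_eq_zero:
  assumes "A \<subseteq> {\<lambda>_. 0}"
  shows "lin_span A = {\<lambda>_. 0}"
proof
  show "lin_span A \<subseteq> {\<lambda>_. 0}"
  proof
    fix x assume "x \<in> lin_span A"
    then show "x \<in> {\<lambda>_. 0}" using assms by (induction rule: lin_span_induct) auto
  qed
qed (simp add: zero_in_lin_span)

lemma br_in_vecs: "br I C x y \<in> vecs I"
  unfolding br_def vecs_def by auto

lemma lcs_Suc_subset_vecs: "lcs I C W (Suc n) \<subseteq> vecs I"
  unfolding lcs.simps by (rule lin_span_subset_vecs) (auto simp: br_in_vecs)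

lemma lcs_Suc_eq_zero:
  assumes "lcs I C W n = {\<lambda>_. 0}"
  shows "lcs I C W (Suc n) = {\<lambda>_. 0}"
  unfolding lcs.simps assms by (rule lin_span_eq_zero) (auto simp: br_def)

definition slice :: "'b set \<Rightarrow> ('b \<times> 's \<Rightarrow> 'k::field) \<Rightarrow> 's \<Rightarrow> 'b \<Rightarrow> 'k" where
  "slice I x c = (\<lambda>i. if i \<in> I then x (i, c) else 0)"

lemma slice_in_vecs: "slice I x c \<in> vecs I"
  by (simp add: slice_def vecs_def)

lemma vecs_eq_zero_if_slices_zero:
  fixes x :: "'b \<times> 's \<Rightarrow> 'k::field"
  assumes "x \<in> vecs (I \<times> T)" "\<And>c. slice I x c = (\<lambda>_. 0)"
  shows "x = (\<lambda>_. 0)"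
proof
  fix p :: "'b \<times> 's"
  obtain i c where p: "p = (i, c)" by (cases p)
  show "x p = 0"
    using assms(1) fun_cong[OF assms(2)[of c], of i] by (auto simp: p slice_def vecs_def split: if_splits)
qed

lemma slice_br_exp_sc:
  fixes x y :: "'b \<times> 's \<Rightarrow> 'k::field"
  assumes "c \<in> T"
  shows "slice I (br (I \<times> T) (exp_sc mult C) x y) c =
    (\<lambda>k. \<Sum>a\<in>T. \<Sum>b\<in>T. if mult a b = c then br I C (slice I x a) (slice I y b) k else 0)"
proof
  fix k
  show "slice I (br (I \<times> T) (exp_sc mult C) x y) c k =
    (\<Sum>a\<in>T. \<Sum>b\<in>T. if mult a b = c then br I C (slice I x a) (slice I y b) k else 0)"
  proof (cases "k \<in> I")
    case True
    let ?t = "\<lambda>i a j b. x (i, a) * y (j, b) * (if mult a b = c then C i j k else 0)"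
    have "slice I (br (I \<times> T) (exp_sc mult C) x y) c k = (\<Sum>i\<in>I. \<Sum>a\<in>T. \<Sum>j\<in>I. \<Sum>b\<in>T. ?t i a j b)"
      using True assms by (simp add: slice_def br_def exp_sc_def sum.cartesian_product')
    also have "\<dots> = (\<Sum>a\<in>T. \<Sum>b\<in>T. \<Sum>i\<in>I. \<Sum>j\<in>I. ?t i a j b)"
      by (subst sum.swap, rule sum.cong, simp, subst sum.swap, rule sum.cong, simp, rule sum.swap)
    also have "\<dots> = (\<Sum>a\<in>T. \<Sum>b\<in>T. if mult a b = c then br I C (slice I x a) (slice I y b) k else 0)"
      using True by (auto simp: br_def slice_def intro!: sum.cong)
    finally show ?thesis .
  qed (auto simp: slice_def br_def intro!: sum.neutral)
qed

lemma slice_lcs_exp_sc: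
  fixes C :: "'b \<Rightarrow> 'b \<Rightarrow> 'b \<Rightarrow> 'k::field" and T :: "'s set"
  assumes "finite T" "x \<in> lcs (I \<times> T) (exp_sc mult C) W n"
  shows "slice I x c \<in> lcs I C (vecs I) n"
  using assms(2)
proof (induction n arbitrary: x c)
  case 0
  then show ?case by (simp add: slice_in_vecs)
next
  case (Suc n)
  let ?G = "lin_span {br I C x y |x y. x \<in> lcs I C (vecs I) n \<and> y \<in> vecs I}"
  have "x \<in> lin_span {br (I \<times> T) (exp_sc mult C) x y |x y. x \<in> lcs (I \<times> T) (exp_sc mult C) W n \<and> y \<in> W}"
    using Suc.prems by simp
  then have "\<forall>c. slice I x c \<in> ?G"
  proof (induction rule: lin_span_induct)
    case (base z)
    then obtain x y where z: "z = br (I \<times> T) (exp_sc mult C) x y"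
      and x: "x \<in> lcs (I \<times> T) (exp_sc mult C) W n" by blast
    show ?case
    proof
      fix c
      show "slice I z c \<in> ?G"
      proof (cases "c \<in> T")
        case False
        then have "slice I z c = (\<lambda>_. 0)" by (auto simp: z br_def slice_def)
        then show ?thesis by (simp add: zero_in_lin_span)
      next
        case True
        have "br I C (slice I x a) (slice I y b) \<in> ?G" for a b
          by (blast intro: lin_span_superset Suc.IH[OF x] slice_in_vecs)
        then have "(\<lambda>k. \<Sum>a\<in>T. \<Sum>b\<in>T. if mult a b = c then br I C (slice I x a) (slice I y b) k else 0) \<in> ?G"
          by (intro lin_span_sum[OF assms(1)], case_tac "mult a b = c") (simp_all add: zero_in_lin_span)
        then show ?thesis unfolding z slice_br_exp_sc[OF True] .
      qed
    qed
  next
    case zero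
    then show ?case by (simp add: slice_def zero_in_lin_span)
  next
    case (scale_add k u v)
    have "slice I (\<lambda>b. k * u b + v b) c = (\<lambda>i. k * slice I u c i + slice I v c i)" for c
      by (auto simp: slice_def)
    then show ?case using scale_add.IH by (simp add: lin_span_scale_add)
  qed
  then show ?case by simp
qed

lemma nilpotent_sub_exp_sc:
  fixes C :: "'b \<Rightarrow> 'b \<Rightarrow> 'b \<Rightarrow> 'k::field" and T :: "'s set"
  assumes "finite T" "nilpotent_LA I C"
  shows "nilpotent_sub (I \<times> T) (exp_sc mult C) W"
proof -
  obtain N where "lcs I C (vecs I) N = {\<lambda>_. 0}"
    using assms(2) unfolding nilpotent_LA_def nilpotent_sub_def by blast
  then have G_N: "lcs I C (vecs I) (Suc N) = {\<lambda>_. 0}"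
    by (rule lcs_Suc_eq_zero)
  have "x = (\<lambda>_. 0)" if x: "x \<in> lcs (I \<times> T) (exp_sc mult C) W (Suc N)" for x
  proof (rule vecs_eq_zero_if_slices_zero)
    show "x \<in> vecs (I \<times> T)" using x lcs_Suc_subset_vecs by blast
    show "slice I x c = (\<lambda>_. 0)" for c using slice_lcs_exp_sc[OF assms(1) x] G_N by blast
  qed
  moreover have "(\<lambda>_. 0) \<in> lcs (I \<times> T) (exp_sc mult C) W (Suc N)"
    by (simp add: zero_in_lin_span)
  ultimately show ?thesis unfolding nilpotent_sub_def by blast
qed

text \<open>The reduced algebra is the expanded bracket on the basis \<open>I \<times> (S - {0\<^sub>S})\<close>:
\<open>br\<close> discards the components along \<open>0\<^sub>S\<close>.\<close>

theorem mainTheorem4: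
  fixes I :: "'b set" and C :: "'b \<Rightarrow> 'b \<Rightarrow> 'b \<Rightarrow> 'k::field"
    and S :: "'s set" and mult :: "'s \<Rightarrow> 's \<Rightarrow> 's"
  assumes "is_lie_sc I C" and "nilpotent_LA I C"
    and "fin_ab_semigroup S mult"
  shows "nilpotent_LA (I \<times> S) (exp_sc mult C)
    \<and> (\<forall>(P :: 'p set) V ip Sp. subspace_decomp I C P V ip \<and> resonant_decomp S mult P ip Sp
          \<longrightarrow> nilpotent_sub (I \<times> S) (exp_sc mult C) (resonant_sub P V Sp))
    \<and> (\<forall>z\<in>S. (\<forall>a\<in>S. mult z a = z) \<longrightarrow> nilpotent_LA (I \<times> (S - {z})) (exp_sc mult C))"
proof -
  have "finite S" "finite (S - {z})" for z
    using assms(3) by (simp_all add: fin_ab_semigroup_def)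
  then show ?thesis
    unfolding nilpotent_LA_def by (simp add: nilpotent_sub_exp_sc[OF _ assms(2)])
qed

end
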